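(* Let $n\ge 4$ and $k\ge 3$ be integers. Let $C_n=\{0,1,\dots,n-1\}$ be the $n$-element chain with the usual order, and let $C_2=\{0,1\}$. Let $K=C_n\times\dots\times C_n\times C_2$ be the direct product of $k$ copies of $C_n$ followed by one copy of $C_2$. Define $$e=(0,\dots,0,1,0),\qquad f=(n-2,\dots,n-2,n-1,0)\in K,$$ where the entry $1$ of $e$ and the entry $n-1$ of $f$ are in coordinate $k$. Let $L(n,k)=K\setminus[e,f]$ with the order inherited from $K$. Then $L(n,k)$ is an upper semimodular lattice with $2n^k-(n-1)^k$ elements and breadth $k$, and $L(n,k)$ fails to satisfy the $c_1$-median property.
   Context: $[e,f]=\{x\in K: e\le x\le f\}$, with the componentwise order on $K$. A lattice is upper semimodular if for all $x,y$, $x\wedge y\prec x$ implies $y\prec x\vee y$, where $\prec$ is the covering relation. The breadth of a lattice $L$ is the least positive integer $n$ such that every join of $m\ge n$ elements equals the join of some $n$ of those elements. For a lattice $L$ of finite length, $d(x,y)$ is the length of a shortest path between $x$ and $y$ in the undirected covering graph of $L$. For $\xi=(x_1,\dots,x_k)\in L^k$, an element $y\in L$ is a median of $\xi$ if $\sum_{i} d(y,x_i)$ is minimum over $L$. The lattice $L$ satisfies the $c_1$-median property if every median $y$ of every profile $\xi$ satisfies $y\le x_1\vee\dots\vee x_k$. *)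

theory Defs
  imports Main
begin

definition is_lub_on :: "'a::order set \<Rightarrow> 'a set \<Rightarrow> 'a \<Rightarrow> bool" where
  "is_lub_on S X z \<longleftrightarrow> z \<in> S \<and> (\<forall>x\<in>X. x \<le> z) \<and> (\<forall>w\<in>S. (\<forall>x\<in>X. x \<le> w) \<longrightarrow> z \<le> w)"

definition is_glb_on :: "'a::order set \<Rightarrow> 'a set \<Rightarrow> 'a \<Rightarrow> bool" where
  "is_glb_on S X z \<longleftrightarrow> z \<in> S \<and> (\<forall>x\<in>X. z \<le> x) \<and> (\<forall>w\<in>S. (\<forall>x\<in>X. w \<le> x) \<longrightarrow> w \<le> z)"

definition lattice_on :: "'a::order set \<Rightarrow> bool" where
  "lattice_on S \<longleftrightarrow> S \<noteq> {} \<and>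
     (\<forall>x\<in>S. \<forall>y\<in>S. (\<exists>z. is_lub_on S {x, y} z) \<and> (\<exists>z. is_glb_on S {x, y} z))"

definition join_set_on :: "'a::order set \<Rightarrow> 'a set \<Rightarrow> 'a" where
  "join_set_on S X = (THE z. is_lub_on S X z)"

definition join_on :: "'a::order set \<Rightarrow> 'a \<Rightarrow> 'a \<Rightarrow> 'a" where
  "join_on S x y = join_set_on S {x, y}"

definition meet_on :: "'a::order set \<Rightarrow> 'a \<Rightarrow> 'a \<Rightarrow> 'a" where
  "meet_on S x y = (THE z. is_glb_on S {x, y} z)"

definition covers_on :: "'a::order set \<Rightarrow> 'a \<Rightarrow> 'a \<Rightarrow> bool" where
  "covers_on S x y \<longleftrightarrow> x \<in> S \<and> y \<in> S \<and> x < y \<and> \<not> (\<exists>z\<in>S. x < z \<and> z < y)"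

definition upper_semimodular_on :: "'a::order set \<Rightarrow> bool" where
  "upper_semimodular_on S \<longleftrightarrow>
     (\<forall>x\<in>S. \<forall>y\<in>S. covers_on S (meet_on S x y) x \<longrightarrow> covers_on S y (join_on S x y))"

definition breadth_le :: "'a::order set \<Rightarrow> nat \<Rightarrow> bool" where
  "breadth_le S n \<longleftrightarrow>
     (\<forall>X. X \<subseteq> S \<and> finite X \<and> card X \<ge> n \<longrightarrow>
        (\<exists>Y\<subseteq>X. card Y = n \<and> join_set_on S Y = join_set_on S X))"

definition breadth :: "'a::order set \<Rightarrow> nat" where
  "breadth S = (LEAST n. 0 < n \<and> breadth_le S n)"

definition cover_graph :: "'a::order set \<Rightarrow> ('a \<times> 'a) set" where
  "cover_graph S = {(x, y). covers_on S x y \<or> covers_on S y x}"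

definition cdist :: "'a::order set \<Rightarrow> 'a \<Rightarrow> 'a \<Rightarrow> nat" where
  "cdist S x y = (LEAST m. (x, y) \<in> cover_graph S ^^ m)"

definition is_median :: "'a::order set \<Rightarrow> 'a list \<Rightarrow> 'a \<Rightarrow> bool" where
  "is_median S xs y \<longleftrightarrow> y \<in> S \<and>
     (\<forall>z\<in>S. (\<Sum>x\<leftarrow>xs. cdist S y x) \<le> (\<Sum>x\<leftarrow>xs. cdist S z x))"

definition c1_median_property :: "'a::order set \<Rightarrow> bool" where
  "c1_median_property S \<longleftrightarrow>
     (\<forall>xs y. xs \<noteq> [] \<and> set xs \<subseteq> S \<and> is_median S xs y \<longrightarrow> y \<le> join_set_on S (set xs))"

text \<open>The product K = C_n^k x C_2, elements as functions nat => nat: coordinates 0..k-1 range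
  over C_n, coordinate k over C_2, all other coordinates are 0. Order is componentwise.\<close>
definition Kprod :: "nat \<Rightarrow> nat \<Rightarrow> (nat \<Rightarrow> nat) set" where
  "Kprod n k = {x. (\<forall>i<k. x i < n) \<and> x k < 2 \<and> (\<forall>i>k. x i = 0)}"

definition e_elem :: "nat \<Rightarrow> nat \<Rightarrow> (nat \<Rightarrow> nat)" where
  "e_elem n k = (\<lambda>i. if i = k - 1 then 1 else 0)"

definition f_elem :: "nat \<Rightarrow> nat \<Rightarrow> (nat \<Rightarrow> nat)" where
  "f_elem n k = (\<lambda>i. if i < k - 1 then n - 2 else if i = k - 1 then n - 1 else 0)"

definition Llat :: "nat \<Rightarrow> nat \<Rightarrow> (nat \<Rightarrow> nat) set" where
  "Llat n k = Kprod n k - {x \<in> Kprod n k. e_elem n k \<le> x \<and> x \<le> f_elem n k}"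

end

theory Submission
  imports Defs "HOL-Library.FuncSet"
begin

text \<open>The set L = K - [e, f] is closed under the componentwise join of K, and for a < b in L
  some unit step above a (increasing one coordinate by 1) stays in L and below b: outside
  coordinate \<open>k - 1\<close> this is automatic, and if b only exceeds a in coordinate \<open>k - 1\<close>, then
  a and b agree elsewhere and b is not below f. Hence the covers of L are exactly its unit
  steps, which gives upper semimodularity and shows that the distance in the covering graph is
  the l1 distance. Meets exist: if the componentwise meet lies in [e, f], setting its
  coordinate \<open>k - 1\<close> to 0 gives the greatest lower bound.

  Since f is one step below the top of K in every coordinate but \<open>k - 1\<close>, in every finite
  subset of L some element attains the join in two coordinates, so k elements suffice for any
  join; the k unit vectors off coordinate \<open>k - 1\<close> show that fewer do not. For the profile
  consisting of the two points with value \<open>n - 1\<close> in coordinates 0 resp. 1 and in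
  coordinate \<open>k - 1\<close>, and the bottom, the point with \<open>n - 1\<close> in coordinate \<open>k - 1\<close> and 1 in
  the last coordinate has total distance 3n, which is minimal, but it is not below the join of
  the profile.\<close>

lemma join_set_on_eqI:
  assumes "is_lub_on S X z"
  shows "join_set_on S X = z"
  unfolding join_set_on_def
proof (rule the_equality)
  show "is_lub_on S X z" by (fact assms)
  show "w = z" if "is_lub_on S X w" for w
    using that assms by (auto simp: is_lub_on_def intro: order.antisym)
qed

lemma meet_on_is_glb_on:
  assumes "lattice_on S" "x \<in> S" "y \<in> S"
  shows "is_glb_on S {x, y} (meet_on S x y)"
proof -
  obtain z where z: "is_glb_on S {x, y} z"
    using assms unfolding lattice_on_def by blast
  have "meet_on S x y = z"
    unfolding meet_on_def
  proof (rule the_equality)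
    show "is_glb_on S {x, y} z" by (fact z)
    show "w = z" if "is_glb_on S {x, y} w" for w
      using that z by (auto simp: is_glb_on_def intro: order.antisym)
  qed
  with z show ?thesis by simp
qed

lemma Sup_fin_fun_attained:
  fixes X :: "('a \<Rightarrow> 'b::{semilattice_sup, linorder}) set"
  assumes "finite X" "X \<noteq> {}"
  shows "\<exists>x\<in>X. x i = Sup_fin X i"
  using assms
proof (induction X rule: finite_ne_induct)
  case (insert x F)
  then obtain y where "y \<in> F" "y i = Sup_fin F i" by blast
  with insert show ?case by (auto simp: sup_max max_def)
qed simp

lemma Sup_fin_fun_eqI:
  fixes X Y :: "('a \<Rightarrow> 'b::{semilattice_sup, linorder}) set"
  assumes "finite X" "Y \<subseteq> X" "Y \<noteq> {}" and attained: "\<And>i. \<exists>y\<in>Y. y i = Sup_fin X i"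
  shows "Sup_fin Y = Sup_fin X"
proof (rule order.antisym)
  show "Sup_fin Y \<le> Sup_fin X"
    using assms(1-3) by (simp add: Sup_fin.subset_imp)
  have "finite Y" using assms(1,2) finite_subset by blast
  show "Sup_fin X \<le> Sup_fin Y"
  proof (rule le_funI)
    fix i
    obtain y where "y \<in> Y" "y i = Sup_fin X i" using attained by blast
    with \<open>finite Y\<close> show "Sup_fin X i \<le> Sup_fin Y i"
      by (metis Sup_fin.coboundedI le_funD)
  qed
qed

lemma card_box_vanishing_above:
  "card {x :: nat \<Rightarrow> 'a::zero. (\<forall>i\<le>k. x i \<in> A i) \<and> (\<forall>i>k. x i = 0)} = (\<Prod>i\<le>k. card (A i))"
proof -
  define extend :: "(nat \<Rightarrow> 'a) \<Rightarrow> nat \<Rightarrow> 'a" where "extend y i = (if i \<le> k then y i else 0)" for y i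
  have "{x. (\<forall>i\<le>k. x i \<in> A i) \<and> (\<forall>i>k. x i = 0)} = extend ` PiE {..k} A"
  proof (intro equalityI subsetI)
    fix x assume x: "x \<in> {x. (\<forall>i\<le>k. x i \<in> A i) \<and> (\<forall>i>k. x i = 0)}"
    then have "x = extend (restrict x {..k})" by (auto simp: extend_def fun_eq_iff)
    moreover have "restrict x {..k} \<in> PiE {..k} A" using x by auto
    ultimately show "x \<in> extend ` PiE {..k} A" by blast
  qed (auto simp: extend_def)
  moreover have "inj_on extend (PiE {..k} A)"
  proof (rule inj_onI, rule PiE_ext)
    fix y y' i assume "extend y = extend y'" "i \<in> {..k}"
    then show "y i = y' i" by (metis atMost_iff extend_def)
  qed
  ultimately show ?thesis by (simp add: card_image card_PiE)
qed

lemma less_unit_step: "a < a(j := Suc (a j))"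
  by (auto simp: less_fun_def le_fun_def fun_eq_iff intro!: exI[of _ j])

lemma between_unit_step:
  assumes "a \<le> z" "z \<le> a(j := Suc (a j))"
  shows "z = a \<or> z = a(j := Suc (a j))"
proof -
  have "z i = a i" if "i \<noteq> j" for i
    using assms that by (metis fun_upd_other le_funD order.antisym)
  moreover have "z j = a j \<or> z j = Suc (a j)"
    using le_funD[OF assms(1), of j] le_funD[OF assms(2), of j] by auto
  ultimately show ?thesis by (metis fun_upd_other fun_upd_same ext)
qed

lemma covers_on_unit_step:
  assumes "a \<in> S" "a(j := Suc (a j)) \<in> S"
  shows "covers_on S a (a(j := Suc (a j)))"
  using assms less_unit_step between_unit_step unfolding covers_on_def
  by (metis order_less_imp_le order_less_irrefl)

definition l1_dist :: "nat \<Rightarrow> (nat \<Rightarrow> nat) \<Rightarrow> (nat \<Rightarrow> nat) \<Rightarrow> nat" where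
  "l1_dist k x z = (\<Sum>i\<le>k. (x i - z i) + (z i - x i))"

lemma l1_dist_commute: "l1_dist k x z = l1_dist k z x"
  unfolding l1_dist_def by (simp add: add.commute)

lemma l1_dist_triangle: "l1_dist k x z \<le> l1_dist k x y + l1_dist k y z"
  unfolding l1_dist_def sum.distrib[symmetric] by (rule sum_mono) linarith

lemma l1_dist_unit_step:
  assumes "j \<le> k"
  shows "l1_dist k a (a(j := Suc (a j))) = 1"
proof -
  have "l1_dist k a (a(j := Suc (a j))) = (\<Sum>i\<le>k. if i = j then 1 else 0)"
    unfolding l1_dist_def by (rule sum.cong) auto
  with assms show ?thesis by simp
qed

text \<open>Covers in such a set are exactly its unit steps, so the distance in its covering graph is
  the l1 distance.\<close>
locale unit_step_semilattice =
  fixes S :: "(nat \<Rightarrow> nat) set" and k :: nat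
  assumes vanish_above: "x \<in> S \<Longrightarrow> k < i \<Longrightarrow> x i = 0"
    and sup_closed: "x \<in> S \<Longrightarrow> y \<in> S \<Longrightarrow> sup x y \<in> S"
    and unit_step: "a \<in> S \<Longrightarrow> b \<in> S \<Longrightarrow> a < b \<Longrightarrow> \<exists>j. a j < b j \<and> a(j := Suc (a j)) \<in> S"
begin

lemma Sup_fin_closed: "finite X \<Longrightarrow> X \<noteq> {} \<Longrightarrow> X \<subseteq> S \<Longrightarrow> Sup_fin X \<in> S"
  by (induction X rule: finite_ne_induct) (simp_all add: sup_closed)

lemma join_set_on_eq_Sup_fin:
  assumes "finite X" "X \<noteq> {}" "X \<subseteq> S"
  shows "join_set_on S X = Sup_fin X"
  using assms Sup_fin_closed
  by (intro join_set_on_eqI) (auto simp: is_lub_on_def intro: Sup_fin.coboundedI Sup_fin.boundedI)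

lemma join_on_eq_sup: "x \<in> S \<Longrightarrow> y \<in> S \<Longrightarrow> join_on S x y = sup x y"
  unfolding join_on_def by (subst join_set_on_eq_Sup_fin) auto

lemma covers_on_imp_unit_step:
  assumes "covers_on S a b"
  obtains j where "b = a(j := Suc (a j))"
proof -
  have "a \<in> S" "b \<in> S" "a < b" using assms by (auto simp: covers_on_def)
  then obtain j where j: "a j < b j" "a(j := Suc (a j)) \<in> S"
    using unit_step by blast
  with \<open>a < b\<close> have "a(j := Suc (a j)) \<le> b"
    by (auto simp: le_fun_def less_fun_def)
  with assms j(2) less_unit_step have "a(j := Suc (a j)) = b"
    unfolding covers_on_def by (metis order.not_eq_order_implies_strict)
  then show thesis by (rule that[OF sym])
qed

text \<open>The cover of the meet m by x is a unit step in some coordinate j; since x is not below y,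
  y agrees with m in coordinate j, so the join of x and y is the unit step of y in coordinate j.\<close>
lemma upper_semimodular:
  assumes "lattice_on S"
  shows "upper_semimodular_on S"
  unfolding upper_semimodular_on_def
proof (intro ballI impI)
  fix x y assume "x \<in> S" "y \<in> S" and cov: "covers_on S (meet_on S x y) x"
  define m where "m = meet_on S x y"
  have "is_glb_on S {x, y} m"
    unfolding m_def using assms \<open>x \<in> S\<close> \<open>y \<in> S\<close> by (rule meet_on_is_glb_on)
  then have "m \<le> y" and greatest: "\<And>w. w \<in> S \<Longrightarrow> w \<le> x \<Longrightarrow> w \<le> y \<Longrightarrow> w \<le> m"
    by (auto simp: is_glb_on_def)
  obtain j where x: "x = m(j := Suc (m j))"
    using cov m_def by (auto elim: covers_on_imp_unit_step)
  have "y j = m j"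
  proof (rule ccontr)
    assume "y j \<noteq> m j"
    with le_funD[OF \<open>m \<le> y\<close>, of j] have "Suc (m j) \<le> y j" by simp
    with \<open>m \<le> y\<close> have "x \<le> y" by (auto simp: x le_fun_def)
    with greatest \<open>x \<in> S\<close> have "x \<le> m" by blast
    then show False using x less_unit_step[of m j] by simp
  qed
  with \<open>m \<le> y\<close> have "sup x y = y(j := Suc (y j))"
    by (auto simp: x fun_eq_iff sup_max le_fun_def max_def)
  moreover have "sup x y \<in> S" using \<open>x \<in> S\<close> \<open>y \<in> S\<close> by (rule sup_closed)
  ultimately show "covers_on S y (join_on S x y)"
    using \<open>x \<in> S\<close> \<open>y \<in> S\<close> covers_on_unit_step[OF \<open>y \<in> S\<close>] by (simp add: join_on_eq_sup)
qed

lemma cover_graph_path_up: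
  assumes "a \<in> S" "b \<in> S" "a \<le> b"
  shows "(a, b) \<in> cover_graph S ^^ (\<Sum>i\<le>k. b i - a i) \<and> (b, a) \<in> cover_graph S ^^ (\<Sum>i\<le>k. b i - a i)"
  using assms
proof (induction "\<Sum>i\<le>k. b i - a i" arbitrary: a)
  case 0
  have "a i = b i" for i
  proof (cases "i \<le> k")
    case True
    with 0 have "b i \<le> a i" by simp
    with le_funD[OF \<open>a \<le> b\<close>] show ?thesis by (meson order.antisym)
  next
    case False
    with vanish_above[OF \<open>a \<in> S\<close>] vanish_above[OF \<open>b \<in> S\<close>] show ?thesis by simp
  qed
  then show ?case by (simp add: fun_eq_iff)
next
  case (Suc d)
  then have "a < b" by (auto simp: less_le)
  then obtain j where j: "a j < b j" "a(j := Suc (a j)) \<in> S"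
    using unit_step Suc.prems by blast
  define c where "c = a(j := Suc (a j))"
  have "c \<in> S" "c \<le> b"
    using j Suc.prems(3) by (auto simp: c_def le_fun_def)
  have "j \<le> k" using vanish_above[OF \<open>b \<in> S\<close>] j by (metis not_le not_less_zero)
  have "(\<Sum>i\<le>k. b i - a i) = (b j - a j) + (\<Sum>i\<in>{..k} - {j}. b i - a i)"
    using \<open>j \<le> k\<close> by (simp add: sum.remove)
  also have "\<dots> = Suc (b j - c j) + (\<Sum>i\<in>{..k} - {j}. b i - c i)"
    using j by (simp add: c_def)
  also have "\<dots> = Suc (\<Sum>i\<le>k. b i - c i)"
    using \<open>j \<le> k\<close> by (simp add: sum.remove)
  finally have "d = (\<Sum>i\<le>k. b i - c i)" using Suc.hyps(2) by simp
  then have IH: "(c, b) \<in> cover_graph S ^^ d \<and> (b, c) \<in> cover_graph S ^^ d"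
    using Suc.hyps(1) \<open>c \<in> S\<close> \<open>b \<in> S\<close> \<open>c \<le> b\<close> by blast
  have "(a, c) \<in> cover_graph S" "(c, a) \<in> cover_graph S"
    using covers_on_unit_step[OF \<open>a \<in> S\<close> j(2)] by (simp_all add: cover_graph_def c_def)
  with IH show ?case unfolding Suc.hyps(2)[symmetric] by (meson relpow_Suc_I relpow_Suc_I2)
qed

lemma cover_graph_relpow_l1_dist:
  assumes "x \<in> S" "z \<in> S"
  shows "(x, z) \<in> cover_graph S ^^ l1_dist k x z"
proof -
  define u where "u = sup x z"
  have "u \<in> S" unfolding u_def using assms by (rule sup_closed)
  have "(x, u) \<in> cover_graph S ^^ (\<Sum>i\<le>k. u i - x i)"
    using cover_graph_path_up[OF \<open>x \<in> S\<close> \<open>u \<in> S\<close>] by (simp add: u_def)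
  moreover have "(u, z) \<in> cover_graph S ^^ (\<Sum>i\<le>k. u i - z i)"
    using cover_graph_path_up[OF \<open>z \<in> S\<close> \<open>u \<in> S\<close>] by (simp add: u_def)
  ultimately have "(x, z) \<in> cover_graph S ^^ ((\<Sum>i\<le>k. u i - x i) + (\<Sum>i\<le>k. u i - z i))"
    by (rule relpow_trans)
  moreover have "(\<Sum>i\<le>k. u i - x i) + (\<Sum>i\<le>k. u i - z i) = l1_dist k x z"
    unfolding l1_dist_def sum.distrib[symmetric] by (rule sum.cong) (simp_all add: u_def sup_max max_def)
  ultimately show ?thesis by simp
qed

lemma l1_dist_covers_on:
  assumes "covers_on S a b"
  shows "l1_dist k a b = 1"
proof -
  obtain j where b: "b = a(j := Suc (a j))"
    using assms by (rule covers_on_imp_unit_step)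
  have "j \<le> k"
    using vanish_above[of b j] assms by (force simp: b covers_on_def)
  then show ?thesis by (simp add: b l1_dist_unit_step)
qed

lemma l1_dist_le_relpow: "(x, z) \<in> cover_graph S ^^ m \<Longrightarrow> l1_dist k x z \<le> m"
proof (induction m arbitrary: z)
  case 0
  then show ?case by (simp add: l1_dist_def)
next
  case (Suc m)
  then obtain y where "(x, y) \<in> cover_graph S ^^ m" "(y, z) \<in> cover_graph S"
    by auto
  then have "l1_dist k x y \<le> m" "l1_dist k y z = 1"
    using Suc.IH l1_dist_covers_on l1_dist_commute[of k y z] by (auto simp: cover_graph_def)
  with l1_dist_triangle[of k x z y] show ?case by simp
qed

lemma cdist_eq_l1_dist:
  assumes "x \<in> S" "z \<in> S"
  shows "cdist S x z = l1_dist k x z"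
proof (rule order.antisym)
  show "cdist S x z \<le> l1_dist k x z"
    unfolding cdist_def using cover_graph_relpow_l1_dist[OF assms] by (rule Least_le)
  have "(x, z) \<in> cover_graph S ^^ cdist S x z"
    unfolding cdist_def using cover_graph_relpow_l1_dist[OF assms] by (rule LeastI)
  then show "l1_dist k x z \<le> cdist S x z" by (rule l1_dist_le_relpow)
qed

text \<open>Together with x, one member of X attaining the supremum in each of the other \<open>k - 1\<close>
  coordinates already has the same supremum; pad this set with further members of X.\<close>
lemma exists_card_subset_same_Sup_fin:
  assumes "finite X" "X \<subseteq> S" "k \<le> card X" "x \<in> X" "j \<le> k" "j' \<le> k" "j \<noteq> j'"
    and "x j = Sup_fin X j" "x j' = Sup_fin X j'"
  shows "\<exists>Y\<subseteq>X. card Y = k \<and> Sup_fin Y = Sup_fin X"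
proof -
  have "X \<noteq> {}" using \<open>x \<in> X\<close> by blast
  obtain wit where wit: "\<And>i. wit i \<in> X" "\<And>i. wit i i = Sup_fin X i"
    using Sup_fin_fun_attained[OF \<open>finite X\<close> \<open>X \<noteq> {}\<close>] by metis
  define W where "W = insert x (wit ` ({..k} - {j, j'}))"
  have "card (wit ` ({..k} - {j, j'})) \<le> card ({..k} - {j, j'})"
    by (rule card_image_le) simp
  also have "\<dots> = k - 1"
    using assms(5-7) by (subst card_Diff_subset) auto
  moreover have "0 < k" using assms(5-7) by linarith
  ultimately have "card W \<le> k"
    unfolding W_def by (auto simp: card_insert_if)
  moreover have "W \<subseteq> X" using \<open>x \<in> X\<close> wit by (auto simp: W_def)
  ultimately obtain Y where "W \<subseteq> Y" "Y \<subseteq> X" "card Y = k"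
    using exists_subset_between[of W k X] assms(1,3) by blast
  have "\<exists>y\<in>Y. y i = Sup_fin X i" for i
  proof -
    consider "i \<in> {j, j'} \<or> k < i" | "i \<in> {..k} - {j, j'}" by fastforce
    then show ?thesis
    proof cases
      case 1
      have "Sup_fin X \<in> S" using \<open>finite X\<close> \<open>X \<noteq> {}\<close> \<open>X \<subseteq> S\<close> by (rule Sup_fin_closed)
      then have "x i = Sup_fin X i"
        using 1 assms(2,4,8,9) vanish_above[of x i] vanish_above[of "Sup_fin X" i] by auto
      with \<open>W \<subseteq> Y\<close> show ?thesis by (auto simp: W_def)
    next
      case 2
      then have "wit i \<in> Y" using \<open>W \<subseteq> Y\<close> by (auto simp: W_def)
      with wit(2) show ?thesis by blast
    qed
  qed
  then have "Sup_fin Y = Sup_fin X"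
    using \<open>finite X\<close> \<open>Y \<subseteq> X\<close> \<open>W \<subseteq> Y\<close> by (intro Sup_fin_fun_eqI) (auto simp: W_def)
  with \<open>Y \<subseteq> X\<close> \<open>card Y = k\<close> show ?thesis by blast
qed

lemma breadth_le_if_Sup_fin_attained_twice:
  assumes "0 < k"
    and twice: "\<And>X. finite X \<Longrightarrow> X \<noteq> {} \<Longrightarrow> X \<subseteq> S \<Longrightarrow>
      \<exists>x\<in>X. \<exists>j\<le>k. \<exists>j'\<le>k. j \<noteq> j' \<and> x j = Sup_fin X j \<and> x j' = Sup_fin X j'"
  shows "breadth_le S k"
  unfolding breadth_le_def
proof (intro allI impI)
  fix X assume X: "X \<subseteq> S \<and> finite X \<and> k \<le> card X"
  with \<open>0 < k\<close> have "X \<noteq> {}" by auto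
  with X twice obtain x j j' where "x \<in> X" "j \<le> k" "j' \<le> k" "j \<noteq> j'"
    "x j = Sup_fin X j" "x j' = Sup_fin X j'" by meson
  with X obtain Y where Y: "Y \<subseteq> X" "card Y = k" "Sup_fin Y = Sup_fin X"
    using exists_card_subset_same_Sup_fin by meson
  with \<open>0 < k\<close> X have "finite Y" "Y \<noteq> {}" "Y \<subseteq> S" by (auto intro: card_ge_0_finite)
  with X Y \<open>X \<noteq> {}\<close> have "join_set_on S Y = join_set_on S X"
    by (simp add: join_set_on_eq_Sup_fin)
  with Y show "\<exists>Y\<subseteq>X. card Y = k \<and> join_set_on S Y = join_set_on S X" by blast
qed

lemma not_breadth_le_unit_vectors:
  assumes "finite I" "(\<lambda>i. (\<lambda>_. 0)(i := 1)) ` I \<subseteq> S" "0 < m" "m < card I"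
  shows "\<not> breadth_le S m"
proof
  assume "breadth_le S m"
  define X where "X = (\<lambda>i. (\<lambda>_. 0::nat)(i := 1)) ` I"
  have "inj_on (\<lambda>i. (\<lambda>_. 0::nat)(i := 1)) I"
    by (rule inj_onI) (metis fun_upd_same fun_upd_other zero_neq_one)
  then have "card X = card I" by (simp add: X_def card_image)
  moreover have "finite X" "X \<subseteq> S" using assms(1,2) by (simp_all add: X_def)
  moreover have "m \<le> card X" using \<open>card X = card I\<close> assms(4) by simp
  ultimately obtain Y where Y: "Y \<subseteq> X" "card Y = m" "join_set_on S Y = join_set_on S X"
    using \<open>breadth_le S m\<close> unfolding breadth_le_def by blast
  have "finite Y" "Y \<noteq> {}" "X \<noteq> {}"
    using Y \<open>finite X\<close> assms(3) finite_subset by fastforce+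
  then have "Sup_fin Y = Sup_fin X"
    using Y \<open>finite X\<close> \<open>X \<subseteq> S\<close> by (simp add: join_set_on_eq_Sup_fin)
  have "Y \<noteq> X" using Y(2) \<open>card X = card I\<close> assms(4) by auto
  with \<open>Y \<subseteq> X\<close> obtain i where "i \<in> I" "(\<lambda>_. 0)(i := 1) \<notin> Y"
    unfolding X_def by blast
  obtain y where "y \<in> Y" "y i = Sup_fin Y i"
    using Sup_fin_fun_attained[OF \<open>finite Y\<close> \<open>Y \<noteq> {}\<close>] by blast
  moreover obtain i' where "y = (\<lambda>_. 0)(i' := 1)"
    using \<open>y \<in> Y\<close> \<open>Y \<subseteq> X\<close> unfolding X_def by blast
  ultimately have "Sup_fin Y i = 0"
    using \<open>(\<lambda>_. 0)(i := 1) \<notin> Y\<close> by (cases "i' = i") auto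
  moreover have "(\<lambda>_. 0)(i := 1) \<le> Sup_fin X"
    using \<open>finite X\<close> \<open>i \<in> I\<close> by (auto simp: X_def intro: Sup_fin.coboundedI)
  ultimately show False
    using \<open>Sup_fin Y = Sup_fin X\<close> by (metis fun_upd_same le_funD not_one_le_zero)
qed

end

lemma Kprod_down_closed: "y \<in> Kprod n k \<Longrightarrow> x \<le> y \<Longrightarrow> x \<in> Kprod n k"
  unfolding Kprod_def le_fun_def by (auto intro: le_less_trans) (metis le_zero_eq)

lemma Kprod_sup_closed: "x \<in> Kprod n k \<Longrightarrow> y \<in> Kprod n k \<Longrightarrow> sup x y \<in> Kprod n k"
  by (auto simp: Kprod_def sup_max)

lemma mem_Llat_iff: "x \<in> Llat n k \<longleftrightarrow> x \<in> Kprod n k \<and> \<not> (e_elem n k \<le> x \<and> x \<le> f_elem n k)"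
  by (auto simp: Llat_def)

lemma e_elem_le_iff: "e_elem n k \<le> x \<longleftrightarrow> x (k - 1) \<noteq> 0"
  by (auto simp: le_fun_def e_elem_def)

lemma card_Kprod: "card (Kprod n k) = 2 * n ^ k"
proof -
  have "Kprod n k = {x. (\<forall>i\<le>k. x i \<in> (if i < k then {..<n} else {..<2})) \<and> (\<forall>i>k. x i = 0)}"
    by (auto simp: Kprod_def)
  then have "card (Kprod n k) = (\<Prod>i\<le>k. card (if i < k then {..<n} else {..<2::nat}))"
    by (simp only: card_box_vanishing_above)
  also have "\<dots> = (\<Prod>i<k. n) * 2"
    unfolding lessThan_Suc_atMost[symmetric] prod.lessThan_Suc by (simp add: prod.cong[OF refl, of _ "\<lambda>_. n"])
  finally show ?thesis by simp
qed

locale Llat_params =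
  fixes n k :: nat
  assumes n_ge_4: "4 \<le> n" and k_ge_3: "3 \<le> k"
begin

lemma Kprod_le_Suc_f_elem:
  assumes "x \<in> Kprod n k" "i \<noteq> k - 1"
  shows "x i \<le> Suc (f_elem n k i)"
proof -
  consider "i < k - 1" | "i = k" | "k < i" using assms(2) by linarith
  then show ?thesis
  proof cases
    case 1
    then have "i < k" by linarith
    with assms(1) have "x i < n" by (simp add: Kprod_def)
    with 1 n_ge_4 show ?thesis by (simp add: f_elem_def)
  qed (use assms(1) k_ge_3 in \<open>auto simp: Kprod_def f_elem_def\<close>)
qed

lemma not_le_f_elem_iff:
  assumes "x \<in> Kprod n k"
  shows "\<not> x \<le> f_elem n k \<longleftrightarrow> (\<exists>i. i \<noteq> k - 1 \<and> f_elem n k i < x i)"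
proof -
  have "k - 1 < k" using k_ge_3 by linarith
  with assms have "x (k - 1) < n" by (simp add: Kprod_def)
  then have "x (k - 1) \<le> f_elem n k (k - 1)" by (simp add: f_elem_def)
  then show ?thesis by (metis le_fun_def not_le)
qed

lemma Llat_sup_closed:
  assumes "x \<in> Llat n k" "y \<in> Llat n k"
  shows "sup x y \<in> Llat n k"
proof -
  have "sup x y \<in> Kprod n k" using assms by (simp add: mem_Llat_iff Kprod_sup_closed)
  moreover have "\<not> (e_elem n k \<le> sup x y \<and> sup x y \<le> f_elem n k)"
  proof
    assume in_interval: "e_elem n k \<le> sup x y \<and> sup x y \<le> f_elem n k"
    then have "\<not> e_elem n k \<le> x" "\<not> e_elem n k \<le> y"
      using assms by (auto simp: mem_Llat_iff intro: order_trans)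
    with in_interval show False by (simp add: e_elem_le_iff sup_max)
  qed
  ultimately show ?thesis by (simp add: mem_Llat_iff)
qed

lemma Llat_unit_step:
  assumes "a \<in> Llat n k" "b \<in> Llat n k" "a < b"
  shows "\<exists>j. a j < b j \<and> a(j := Suc (a j)) \<in> Llat n k"
proof -
  have "a \<le> b" "b \<in> Kprod n k" using assms by (auto simp: mem_Llat_iff)
  have up: "a(j := Suc (a j)) \<le> b" if "a j < b j" for j
    using \<open>a \<le> b\<close> that by (auto simp: le_fun_def)
  consider (off) j where "j \<noteq> k - 1" "a j < b j" | (only) "\<And>j. j \<noteq> k - 1 \<Longrightarrow> a j = b j"
    using \<open>a \<le> b\<close> by (metis le_funD order_less_le)
  then show ?thesis
  proof cases
    case off
    let ?c = "a(j := Suc (a j))"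
    have "?c \<in> Kprod n k" using Kprod_down_closed[OF \<open>b \<in> Kprod n k\<close> up[OF off(2)]] .
    moreover have "\<not> (e_elem n k \<le> ?c \<and> ?c \<le> f_elem n k)"
    proof
      assume c: "e_elem n k \<le> ?c \<and> ?c \<le> f_elem n k"
      then have "e_elem n k \<le> a" using off(1) by (simp add: e_elem_le_iff)
      moreover have "a \<le> f_elem n k"
        using c less_unit_step[of a j] by (meson order.strict_implies_order order.trans)
      ultimately show False using assms(1) by (simp add: mem_Llat_iff)
    qed
    ultimately show ?thesis using off(2) by (auto simp: mem_Llat_iff)
  next
    case only
    let ?c = "a(k - 1 := Suc (a (k - 1)))"
    have "a (k - 1) < b (k - 1)"
      using only \<open>a < b\<close> by (metis ext le_funD order_less_le \<open>a \<le> b\<close>)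
    then have "e_elem n k \<le> b" by (simp add: e_elem_le_iff)
    then obtain i where "i \<noteq> k - 1" "f_elem n k i < b i"
      using assms(2) \<open>b \<in> Kprod n k\<close> by (auto simp: mem_Llat_iff not_le_f_elem_iff)
    then have "\<not> ?c \<le> f_elem n k" using only by (auto simp: le_fun_def not_le)
    moreover have "?c \<in> Kprod n k" using Kprod_down_closed[OF \<open>b \<in> Kprod n k\<close> up] \<open>a (k - 1) < b (k - 1)\<close> .
    ultimately show ?thesis using \<open>a (k - 1) < b (k - 1)\<close> by (auto simp: mem_Llat_iff)
  qed
qed

lemma Llat_has_glb:
  assumes "x \<in> Llat n k" "y \<in> Llat n k"
  shows "\<exists>z. is_glb_on (Llat n k) {x, y} z"
proof (cases "inf x y \<in> Llat n k")
  case True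
  then show ?thesis using assms by (auto simp: is_glb_on_def)
next
  case False
  let ?q = "(inf x y)(k - 1 := 0)"
  have "inf x y \<in> Kprod n k"
    using assms Kprod_down_closed[of x n k "inf x y"] by (simp add: mem_Llat_iff)
  with False have below_f: "inf x y \<le> f_elem n k" by (simp add: mem_Llat_iff)
  have "?q \<le> inf x y" by (simp add: le_fun_def)
  moreover have "?q \<in> Llat n k"
    using Kprod_down_closed[OF \<open>inf x y \<in> Kprod n k\<close> \<open>?q \<le> inf x y\<close>]
    by (simp add: mem_Llat_iff e_elem_le_iff)
  moreover have "w \<le> ?q" if "w \<in> Llat n k" "w \<le> x" "w \<le> y" for w
  proof -
    have "w \<le> f_elem n k" using that below_f by (meson le_inf_iff order_trans)
    with that(1) have "w (k - 1) = 0" by (simp add: mem_Llat_iff e_elem_le_iff)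
    with that(2,3) show ?thesis by (auto simp: le_fun_def)
  qed
  ultimately have "is_glb_on (Llat n k) {x, y} ?q"
    by (auto simp: is_glb_on_def intro: order_trans)
  then show ?thesis by blast
qed

lemma zero_in_Llat: "(\<lambda>_. 0) \<in> Llat n k"
  using n_ge_4 by (auto simp: mem_Llat_iff Kprod_def e_elem_le_iff)

lemma lattice_on_Llat: "lattice_on (Llat n k)"
proof -
  have "is_lub_on (Llat n k) {x, y} (sup x y)" if "x \<in> Llat n k" "y \<in> Llat n k" for x y
    using that Llat_sup_closed by (simp add: is_lub_on_def)
  then show ?thesis
    using zero_in_Llat Llat_has_glb unfolding lattice_on_def by blast
qed

sublocale unit_step_semilattice "Llat n k" k
proof unfold_locales
  fix x i assume "x \<in> Llat n k" "k < i"
  then show "x i = 0" by (simp add: mem_Llat_iff Kprod_def)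
qed (simp_all add: Llat_sup_closed Llat_unit_step)

lemma removed_interval_eq_box:
  "{x \<in> Kprod n k. e_elem n k \<le> x \<and> x \<le> f_elem n k}
    = {x. (\<forall>i\<le>k. x i \<in> {e_elem n k i..f_elem n k i}) \<and> (\<forall>i>k. x i = 0)}"
proof (intro equalityI subsetI)
  fix x assume "x \<in> {x \<in> Kprod n k. e_elem n k \<le> x \<and> x \<le> f_elem n k}"
  then show "x \<in> {x. (\<forall>i\<le>k. x i \<in> {e_elem n k i..f_elem n k i}) \<and> (\<forall>i>k. x i = 0)}"
    by (auto simp: Kprod_def le_fun_def)
next
  fix x assume x: "x \<in> {x. (\<forall>i\<le>k. x i \<in> {e_elem n k i..f_elem n k i}) \<and> (\<forall>i>k. x i = 0)}"
  have "e_elem n k \<le> x" "x \<le> f_elem n k"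
    unfolding le_fun_def
  proof safe
    fix i
    show "e_elem n k i \<le> x i" "x i \<le> f_elem n k i"
      using x by (cases "i \<le> k"; force simp: e_elem_def f_elem_def)+
  qed
  moreover have "f_elem n k \<in> Kprod n k"
    using n_ge_4 k_ge_3 by (auto simp: Kprod_def f_elem_def)
  ultimately show "x \<in> {x \<in> Kprod n k. e_elem n k \<le> x \<and> x \<le> f_elem n k}"
    using Kprod_down_closed by blast
qed

lemma card_removed_interval: "card {x \<in> Kprod n k. e_elem n k \<le> x \<and> x \<le> f_elem n k} = (n - 1) ^ k"
proof -
  have "card {x \<in> Kprod n k. e_elem n k \<le> x \<and> x \<le> f_elem n k}
      = (\<Prod>i\<le>k. card {e_elem n k i..f_elem n k i})"
    unfolding removed_interval_eq_box by (rule card_box_vanishing_above)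
  also have "\<dots> = (\<Prod>i<k. Suc (f_elem n k i) - e_elem n k i) * (Suc (f_elem n k k) - e_elem n k k)"
    unfolding lessThan_Suc_atMost[symmetric] prod.lessThan_Suc by simp
  also have "\<dots> = (\<Prod>i<k. n - 1) * 1"
    using n_ge_4 k_ge_3 by (intro arg_cong2[where f = times] prod.cong) (auto simp: e_elem_def f_elem_def)
  finally show ?thesis by simp
qed

lemma card_Llat: "card (Llat n k) = 2 * n ^ k - (n - 1) ^ k"
proof -
  have "finite (Kprod n k)" using card_Kprod n_ge_4 by (intro card_ge_0_finite) simp
  then show ?thesis
    unfolding Llat_def by (simp add: card_Diff_subset card_Kprod card_removed_interval)
qed

lemma Llat_Sup_fin_attained_twice:
  assumes "finite X" "X \<noteq> {}" "X \<subseteq> Llat n k"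
  shows "\<exists>x\<in>X. \<exists>j\<le>k. \<exists>j'\<le>k. j \<noteq> j' \<and> x j = Sup_fin X j \<and> x j' = Sup_fin X j'"
proof -
  let ?s = "Sup_fin X"
  have "?s \<in> Llat n k" using assms by (rule Sup_fin_closed)
  have below: "x i \<le> ?s i" if "x \<in> X" for x i
    using that assms(1) by (metis Sup_fin.coboundedI le_funD)
  obtain w where "w \<in> X" "w (k - 1) = ?s (k - 1)"
    using Sup_fin_fun_attained[OF assms(1,2)] by blast
  have "0 \<noteq> k - 1" "k - 1 \<le> k" using k_ge_3 by auto
  show ?thesis
  proof (cases "?s (k - 1) = 0")
    case True
    obtain w0 where "w0 \<in> X" "w0 0 = ?s 0"
      using Sup_fin_fun_attained[OF assms(1,2)] by blast
    moreover have "w0 (k - 1) = ?s (k - 1)"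
      using below[OF \<open>w0 \<in> X\<close>, of "k - 1"] True by simp
    ultimately show ?thesis using \<open>0 \<noteq> k - 1\<close> \<open>k - 1 \<le> k\<close> by blast
  next
    case False
    with \<open>w (k - 1) = ?s (k - 1)\<close> have "e_elem n k \<le> w" by (simp add: e_elem_le_iff)
    moreover have "w \<in> Llat n k" using \<open>w \<in> X\<close> assms(3) by blast
    ultimately obtain i where "i \<noteq> k - 1" "f_elem n k i < w i"
      by (auto simp: mem_Llat_iff not_le_f_elem_iff)
    moreover have "?s i \<le> Suc (f_elem n k i)"
      using \<open>?s \<in> Llat n k\<close> \<open>i \<noteq> k - 1\<close> by (simp add: mem_Llat_iff Kprod_le_Suc_f_elem)
    ultimately have "w i = ?s i" using below[OF \<open>w \<in> X\<close>, of i] by linarith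
    moreover have "i \<le> k"
      using vanish_above[OF \<open>w \<in> Llat n k\<close>, of i] \<open>f_elem n k i < w i\<close> by (cases "k < i") auto
    ultimately show ?thesis
      using \<open>w \<in> X\<close> \<open>w (k - 1) = ?s (k - 1)\<close> \<open>i \<noteq> k - 1\<close> \<open>k - 1 \<le> k\<close> by blast
  qed
qed

lemma unit_vector_in_Llat: "i \<le> k \<Longrightarrow> i \<noteq> k - 1 \<Longrightarrow> (\<lambda>_. 0)(i := 1) \<in> Llat n k"
  using n_ge_4 by (auto simp: mem_Llat_iff Kprod_def e_elem_le_iff)

lemma breadth_Llat: "breadth (Llat n k) = k"
  unfolding breadth_def
proof (rule Least_equality)
  show "0 < k \<and> breadth_le (Llat n k) k"
    using k_ge_3 Llat_Sup_fin_attained_twice by (simp add: breadth_le_if_Sup_fin_attained_twice)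
  let ?I = "insert k {..<k - 1}"
  have "finite ?I" "card ?I = k" using k_ge_3 by simp_all
  moreover have "(\<lambda>i. (\<lambda>_. 0)(i := 1)) ` ?I \<subseteq> Llat n k"
    using unit_vector_in_Llat k_ge_3 by auto
  ultimately have "\<not> breadth_le (Llat n k) m" if "0 < m" "m < k" for m
    using not_breadth_le_unit_vectors[of ?I m] that by simp
  then show "k \<le> m" if "0 < m \<and> breadth_le (Llat n k) m" for m
    using that not_le by blast
qed

definition profile :: "(nat \<Rightarrow> nat) list" where
  "profile = [(\<lambda>_. 0)(0 := n - 1, k - 1 := n - 1), (\<lambda>_. 0)(1 := n - 1, k - 1 := n - 1), (\<lambda>_. 0)]"

definition outlier :: "nat \<Rightarrow> nat" where
  "outlier = (\<lambda>_. 0)(k - 1 := n - 1, k := 1)"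

lemma peak_in_Llat:
  assumes "j < k - 1"
  shows "(\<lambda>_. 0)(j := n - 1, k - 1 := n - 1) \<in> Llat n k"
proof -
  let ?x = "(\<lambda>_. 0)(j := n - 1, k - 1 := n - 1)"
  have "?x \<in> Kprod n k" using assms n_ge_4 by (auto simp: Kprod_def)
  moreover have "f_elem n k j < ?x j" using assms n_ge_4 by (simp add: f_elem_def)
  then have "\<not> ?x \<le> f_elem n k" by (auto dest: le_funD[where x = j])
  ultimately show ?thesis by (simp add: mem_Llat_iff)
qed

lemma profile_in_Llat: "set profile \<subseteq> Llat n k"
  using peak_in_Llat[of 0] peak_in_Llat[of 1] zero_in_Llat k_ge_3 by (simp add: profile_def)

lemma outlier_in_Llat: "outlier \<in> Llat n k"
proof -
  have "outlier \<in> Kprod n k" using n_ge_4 k_ge_3 by (auto simp: outlier_def Kprod_def)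
  moreover have "f_elem n k k < outlier k" using k_ge_3 by (simp add: outlier_def f_elem_def)
  then have "\<not> outlier \<le> f_elem n k" by (auto dest: le_funD[where x = k])
  ultimately show ?thesis by (simp add: mem_Llat_iff)
qed

lemma total_l1_dist_outlier: "(\<Sum>x\<leftarrow>profile. l1_dist k outlier x) = 3 * n"
proof -
  have "l1_dist k outlier ((\<lambda>_. 0)(j := n - 1, k - 1 := n - 1)) = n" if "j < k - 1" for j
  proof -
    have "l1_dist k outlier ((\<lambda>_. 0)(j := n - 1, k - 1 := n - 1))
        = (\<Sum>i\<le>k. (if i = j then n - 1 else 0) + (if i = k then 1 else 0))"
      unfolding l1_dist_def outlier_def using that by (intro sum.cong) auto
    also have "\<dots> = n" using that n_ge_4 by (simp add: sum.distrib)
    finally show ?thesis .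
  qed
  moreover have "l1_dist k outlier (\<lambda>_. 0) = n"
  proof -
    have "l1_dist k outlier (\<lambda>_. 0) = (\<Sum>i\<le>k. (if i = k - 1 then n - 1 else 0) + (if i = k then 1 else 0))"
      unfolding l1_dist_def outlier_def using k_ge_3 by (intro sum.cong) auto
    also have "\<dots> = n" using n_ge_4 by (simp add: sum.distrib)
    finally show ?thesis .
  qed
  ultimately show ?thesis using k_ge_3 by (simp add: profile_def)
qed

definition profile_cost :: "(nat \<Rightarrow> nat) \<Rightarrow> nat \<Rightarrow> nat" where
  "profile_cost z i = (\<Sum>x\<leftarrow>profile. (z i - x i) + (x i - z i))"

lemma total_l1_dist_eq_sum_profile_cost:
  "(\<Sum>x\<leftarrow>profile. l1_dist k z x) = (\<Sum>i\<le>k. profile_cost z i)"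
  by (simp add: profile_def profile_cost_def l1_dist_def sum.distrib)

lemma profile_cost:
  assumes "z \<in> Kprod n k"
  shows "profile_cost z 0 = n - 1 + z 0" "profile_cost z 1 = n - 1 + z 1"
    and "profile_cost z (k - 1) = 2 * (n - 1) - z (k - 1)"
    and "i \<notin> {0, 1, k - 1} \<Longrightarrow> profile_cost z i = 3 * z i"
proof -
  have "0 \<noteq> k - 1" "1 \<noteq> k - 1" "0 < k" "1 < k" "k - 1 < k" using k_ge_3 by auto
  with assms have "z 0 < n" "z 1 < n" "z (k - 1) < n" by (simp_all add: Kprod_def)
  with \<open>0 \<noteq> k - 1\<close> \<open>1 \<noteq> k - 1\<close>
  show "profile_cost z 0 = n - 1 + z 0" "profile_cost z 1 = n - 1 + z 1"
    and "profile_cost z (k - 1) = 2 * (n - 1) - z (k - 1)"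
    by (simp_all add: profile_cost_def profile_def)
  show "profile_cost z i = 3 * z i" if "i \<notin> {0, 1, k - 1}"
    using that \<open>0 < k\<close> by (auto simp: profile_cost_def profile_def)
qed

lemma total_l1_dist_ge:
  assumes "z \<in> Llat n k"
  shows "3 * n \<le> (\<Sum>x\<leftarrow>profile. l1_dist k z x)"
proof -
  let ?G = "profile_cost z"
  have "z \<in> Kprod n k" using assms by (simp add: mem_Llat_iff)
  note G = profile_cost[OF this]
  have "z (k - 1) < n" using \<open>z \<in> Kprod n k\<close> k_ge_3 by (simp add: Kprod_def)
  have distinct: "0 \<noteq> k - 1" "1 \<noteq> k - 1" "(1::nat) \<le> k" using k_ge_3 by auto
  have three: "?G 0 + ?G 1 + ?G (k - 1) \<le> (\<Sum>i\<le>k. ?G i)"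
  proof -
    have "(\<Sum>i\<in>{0, 1, k - 1}. ?G i) \<le> (\<Sum>i\<le>k. ?G i)" using distinct by (intro sum_mono2) auto
    with distinct show ?thesis by simp
  qed
  have "3 * n \<le> (\<Sum>i\<le>k. ?G i)"
  proof (cases "z (k - 1) = 0")
    case True
    with G three n_ge_4 show ?thesis by linarith
  next
    case False
    with assms obtain i where "i \<noteq> k - 1" "f_elem n k i < z i"
      by (auto simp: mem_Llat_iff e_elem_le_iff not_le_f_elem_iff)
    show ?thesis
    proof (cases "i = 0 \<or> i = 1")
      case True
      with distinct have "f_elem n k i = n - 2" by (auto simp: f_elem_def)
      with True \<open>f_elem n k i < z i\<close> have "n - 1 \<le> z 0 + z 1" by auto
      with G three n_ge_4 \<open>z (k - 1) < n\<close> show ?thesis by linarith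
    next
      case False
      with \<open>i \<noteq> k - 1\<close> have "i \<notin> {0, 1, k - 1}" by simp
      have "i \<le> k"
        using vanish_above[OF assms, of i] \<open>f_elem n k i < z i\<close> by (cases "k < i") auto
      then have "(\<Sum>i\<in>{0, 1, k - 1, i}. ?G i) \<le> (\<Sum>i\<le>k. ?G i)" using distinct by (intro sum_mono2) auto
      with \<open>i \<notin> {0, 1, k - 1}\<close> distinct have "?G 0 + ?G 1 + ?G (k - 1) + ?G i \<le> (\<Sum>i\<le>k. ?G i)"
        by simp
      with G(1-3) G(4)[OF \<open>i \<notin> {0, 1, k - 1}\<close>] \<open>f_elem n k i < z i\<close> n_ge_4 \<open>z (k - 1) < n\<close>
      show ?thesis by linarith
    qed
  qed
  then show ?thesis by (simp add: total_l1_dist_eq_sum_profile_cost)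
qed

lemma not_c1_median_property_Llat: "\<not> c1_median_property (Llat n k)"
proof -
  have total_cdist: "(\<Sum>x\<leftarrow>profile. cdist (Llat n k) z x) = (\<Sum>x\<leftarrow>profile. l1_dist k z x)"
    if "z \<in> Llat n k" for z
    using that profile_in_Llat cdist_eq_l1_dist by (intro arg_cong[where f = sum_list] map_cong refl) blast
  have median: "is_median (Llat n k) profile outlier"
    unfolding is_median_def
  proof (intro conjI ballI)
    show "outlier \<in> Llat n k" by (rule outlier_in_Llat)
    fix z assume "z \<in> Llat n k"
    have "(\<Sum>x\<leftarrow>profile. cdist (Llat n k) outlier x) = (\<Sum>x\<leftarrow>profile. l1_dist k outlier x)"
      using outlier_in_Llat by (rule total_cdist)
    also have "\<dots> = 3 * n" by (rule total_l1_dist_outlier)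
    also have "\<dots> \<le> (\<Sum>x\<leftarrow>profile. l1_dist k z x)"
      using \<open>z \<in> Llat n k\<close> by (rule total_l1_dist_ge)
    also have "\<dots> = (\<Sum>x\<leftarrow>profile. cdist (Llat n k) z x)"
      using \<open>z \<in> Llat n k\<close> by (rule total_cdist[symmetric])
    finally show "(\<Sum>x\<leftarrow>profile. cdist (Llat n k) outlier x) \<le> (\<Sum>x\<leftarrow>profile. cdist (Llat n k) z x)" .
  qed
  have "finite (set profile)" "set profile \<noteq> {}" "profile \<noteq> []"
    by (simp_all add: profile_def)
  obtain x where "x \<in> set profile" "x k = Sup_fin (set profile) k"
    using Sup_fin_fun_attained[OF \<open>finite (set profile)\<close> \<open>set profile \<noteq> {}\<close>] by blast
  moreover have "y k = 0" if "y \<in> set profile" for y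
    using that k_ge_3 by (auto simp: profile_def)
  ultimately have "join_set_on (Llat n k) (set profile) k = 0"
    using join_set_on_eq_Sup_fin[OF \<open>finite (set profile)\<close> \<open>set profile \<noteq> {}\<close> profile_in_Llat]
    by metis
  moreover have "outlier k = 1" by (simp add: outlier_def)
  ultimately have "\<not> outlier \<le> join_set_on (Llat n k) (set profile)"
    using le_funD[of outlier _ k] by fastforce
  with median profile_in_Llat \<open>profile \<noteq> []\<close> show ?thesis
    unfolding c1_median_property_def by blast
qed

end

theorem lemma2p3:
  fixes n k :: nat
  assumes "n \<ge> 4" and "k \<ge> 3"
  shows "lattice_on (Llat n k) \<and> upper_semimodular_on (Llat n k) \<and>
         card (Llat n k) = 2 * n ^ k - (n - 1) ^ k \<and>
         breadth (Llat n k) = k \<and> \<not> c1_median_property (Llat n k)"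
proof -
  interpret Llat_params n k using assms by unfold_locales
  have "upper_semimodular_on (Llat n k)" using lattice_on_Llat by (rule upper_semimodular)
  with lattice_on_Llat card_Llat breadth_Llat not_c1_median_property_Llat show ?thesis
    by (intro conjI)
qed

end
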